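(* Let $\mathcal C,\mathcal C'\subseteq\mathbb F_2^n$ be binary linear codes, $\sigma\in S_n$, $G$ a reduced basis of $\mathcal C$ (output of Algorithm R for $\mathcal C$ and the error-vector order built from some admissible order) and $G'$ a reduced basis of $\mathcal C'$ (output of Algorithm R for $\mathcal C'$ and the error-vector order built from some admissible order). Put $G^\star=\sigma(G)$. The following are equivalent: (i) $\mathcal C'=\sigma(\mathcal C)$; (ii) $G^\star$ is a reduced basis for $\mathcal C'$, i.e. it is the output of Algorithm R for $\mathcal C'$ and the error-vector order built from some admissible order (some ordering of the variables); (iii) every binomial of $G^\star$ reduces to zero modulo $G'$, and every binomial of $G'$ reduces to zero modulo $G^\star$.
   Context: Binary setting: $[X]$ is the free commutative monoid on $X=\{x_1,\dots,x_n\}$; $\psi(\prod x_i^{\beta_i})=(\beta_i\bmod 2)_i\in\mathbb F_2^n$; a code of dimension $k$ has parity check matrix $H$ ($n\times(n-k)$, code $=\{c:cH=0\}$); syndrome $\xi(w)=\psi(w)H$. $\mathrm{Ind}(w)=\{i:x_i\mid w\}$. For an admissible order $\prec$ the error-vector order is $u<_e w$ iff $|\mathrm{Ind}(u)|<|\mathrm{Ind}(w)|$, or equality and $u\prec w$. For $\sigma\in S_n$: $\sigma((y_i)_i)=(y_{\sigma^{-1}(i)})_i$, $\sigma(\mathcal C)=\{\sigma(c):c\in\mathcal C\}$, on $[X]$ $\sigma$ is the automorphism $x_i\mapsto x_{\sigma(i)}$, acting termwise on binomials. Algorithm R: list $L$ sorted increasingly by $<_e$, set $N$, set $G$ of binomials;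 initially $L=(1)$, $N=G=\emptyset$. While $L\neq\emptyset$: remove the $<_e$-smallest $w$; if $w$ is divisible by the leading word of a binomial in $G$, discard it; otherwise if some $w'\in N$ has $\xi(w')=\xi(w)$, add $w-w'$ to $G$ with leading word $w$; else add $w$ to $N$ and insert all $wx$ ($x\in X$) into $L$. Output $(N,G)$. For a set $B$ of binomials each with a designated leading word (for $\sigma(G)$, the leading word of $\sigma(u-v)$ is $\sigma(u)$), one-step reduction modulo $B$: a non-standard word (some exponent $\ge2$) reduces to its standard form (exponents mod 2); a standard word $w=us$ with $u-u'\in B$ of leading word $u$ reduces to $u's$. Irreducible means no reduction applies. A binomial $u-v$ reduces to zero modulo $B$ if some irreducible word obtained from $u$ by a finite sequence of one-step reductions equals some irreducible word so obtained from $v$. *)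

theory Defs
  imports "HOL-Combinatorics.Permutations"
begin

type_synonym word = "nat \<Rightarrow> nat"          (* exponent vector *)
type_synonym bvec = "nat \<Rightarrow> bool"          (* vector of F_2^n, True = 1 *)

definition words :: "nat \<Rightarrow> word set" where
  "words n = {w. \<forall>i\<ge>n. w i = 0}"

definition one_w :: word where "one_w = (\<lambda>_. 0)"

definition var_w :: "nat \<Rightarrow> word" where "var_w i = (\<lambda>j. if j = i then 1 else 0)"

definition mult_w :: "word \<Rightarrow> word \<Rightarrow> word" where
  "mult_w u v = (\<lambda>i. u i + v i)"

definition divides_w :: "word \<Rightarrow> word \<Rightarrow> bool" where
  "divides_w u w \<longleftrightarrow> (\<forall>i. u i \<le> w i)"

definition Ind :: "word \<Rightarrow> nat set" where
  "Ind w = {i. 0 < w i}"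

definition vectors :: "nat \<Rightarrow> bvec set" where
  "vectors n = {c. \<forall>i\<ge>n. \<not> c i}"

definition psi :: "nat \<Rightarrow> word \<Rightarrow> bvec" where
  "psi n w = (\<lambda>i. i < n \<and> odd (w i))"

definition binary_linear_code :: "nat \<Rightarrow> bvec set \<Rightarrow> bool" where
  "binary_linear_code n C \<longleftrightarrow> C \<subseteq> vectors n \<and> (\<lambda>_. False) \<in> C \<and>
     (\<forall>a\<in>C. \<forall>b\<in>C. (\<lambda>i. a i \<noteq> b i) \<in> C)"

definition vec_mat :: "nat \<Rightarrow> nat \<Rightarrow> bvec \<Rightarrow> (nat \<Rightarrow> nat \<Rightarrow> bool) \<Rightarrow> bvec" where
  "vec_mat n m c H = (\<lambda>j. j < m \<and> odd (card {i. i < n \<and> c i \<and> H i j}))"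

(* H (n x m) is a parity check matrix of C: C = {c : cH = 0} and m = n - dim C,
   i.e. |C| * 2^m = 2^n *)
definition parity_check :: "nat \<Rightarrow> bvec set \<Rightarrow> nat \<Rightarrow> (nat \<Rightarrow> nat \<Rightarrow> bool) \<Rightarrow> bool" where
  "parity_check n C m H \<longleftrightarrow>
     (\<forall>c\<in>vectors n. c \<in> C \<longleftrightarrow> vec_mat n m c H = (\<lambda>_. False)) \<and>
     card C * 2 ^ m = 2 ^ n"

definition syndrome :: "nat \<Rightarrow> nat \<Rightarrow> (nat \<Rightarrow> nat \<Rightarrow> bool) \<Rightarrow> word \<Rightarrow> bvec" where
  "syndrome n m H w = vec_mat n m (psi n w) H"

(* ord is the strict order \<prec> *)
definition admissible :: "nat \<Rightarrow> (word \<Rightarrow> word \<Rightarrow> bool) \<Rightarrow> bool" where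
  "admissible n ord \<longleftrightarrow>
     (\<forall>u\<in>words n. \<not> ord u u) \<and>
     (\<forall>u\<in>words n. \<forall>v\<in>words n. \<forall>w\<in>words n. ord u v \<longrightarrow> ord v w \<longrightarrow> ord u w) \<and>
     (\<forall>u\<in>words n. \<forall>v\<in>words n. u \<noteq> v \<longrightarrow> ord u v \<or> ord v u) \<and>
     (\<forall>w\<in>words n. w \<noteq> one_w \<longrightarrow> ord one_w w) \<and>
     (\<forall>u\<in>words n. \<forall>v\<in>words n. \<forall>w\<in>words n. ord u v \<longrightarrow> ord (mult_w u w) (mult_w v w))"

definition err_less :: "(word \<Rightarrow> word \<Rightarrow> bool) \<Rightarrow> word \<Rightarrow> word \<Rightarrow> bool" where
  "err_less ord u w \<longleftrightarrow> card (Ind u) < card (Ind w) \<or>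
     (card (Ind u) = card (Ind w) \<and> ord u w)"

(* state: (L, N, G); L is the (sorted, duplicate-free) list, kept as a set;
   G is a set of binomials (u, v) meaning u - v with leading word u *)
type_synonym rstate = "word set \<times> word set \<times> (word \<times> word) set"

inductive R_step :: "nat \<Rightarrow> (word \<Rightarrow> bvec) \<Rightarrow> (word \<Rightarrow> word \<Rightarrow> bool) \<Rightarrow> rstate \<Rightarrow> rstate \<Rightarrow> bool"
  for n xi ord where
  discard: "\<lbrakk> w \<in> L; \<forall>w'\<in>L. w' \<noteq> w \<longrightarrow> err_less ord w w';
             \<exists>(u, v)\<in>G. divides_w u w \<rbrakk>
           \<Longrightarrow> R_step n xi ord (L, N, G) (L - {w}, N, G)"
| newbin: "\<lbrakk> w \<in> L; \<forall>w'\<in>L. w' \<noteq> w \<longrightarrow> err_less ord w w';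
             \<not> (\<exists>(u, v)\<in>G. divides_w u w); w' \<in> N; xi w' = xi w \<rbrakk>
           \<Longrightarrow> R_step n xi ord (L, N, G) (L - {w}, N, G \<union> {(w, w')})"
| newstd: "\<lbrakk> w \<in> L; \<forall>w'\<in>L. w' \<noteq> w \<longrightarrow> err_less ord w w';
             \<not> (\<exists>(u, v)\<in>G. divides_w u w); \<not> (\<exists>w'\<in>N. xi w' = xi w) \<rbrakk>
           \<Longrightarrow> R_step n xi ord (L, N, G)
                 ((L - {w}) \<union> {mult_w w (var_w i) | i. i < n}, N \<union> {w}, G)"

definition R_output :: "nat \<Rightarrow> (word \<Rightarrow> bvec) \<Rightarrow> (word \<Rightarrow> word \<Rightarrow> bool) \<Rightarrow>
    word set \<Rightarrow> (word \<times> word) set \<Rightarrow> bool" where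
  "R_output n xi ord N G \<longleftrightarrow> (R_step n xi ord)\<^sup>*\<^sup>* ({one_w}, {}, {}) ({}, N, G)"

definition reduced_basis :: "nat \<Rightarrow> bvec set \<Rightarrow> (word \<times> word) set \<Rightarrow> bool" where
  "reduced_basis n C G \<longleftrightarrow>
     (\<exists>ord m H N. admissible n ord \<and> parity_check n C m H \<and>
        R_output n (syndrome n m H) ord N G)"

definition perm_vec :: "(nat \<Rightarrow> nat) \<Rightarrow> bvec \<Rightarrow> bvec" where
  "perm_vec \<sigma> y = (\<lambda>i. y (inv \<sigma> i))"

definition perm_code :: "(nat \<Rightarrow> nat) \<Rightarrow> bvec set \<Rightarrow> bvec set" where
  "perm_code \<sigma> C = perm_vec \<sigma> ` C"

(* automorphism x_i \<mapsto> x_(\<sigma> i) of [X] *)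
definition perm_word :: "(nat \<Rightarrow> nat) \<Rightarrow> word \<Rightarrow> word" where
  "perm_word \<sigma> w = (\<lambda>j. w (inv \<sigma> j))"

definition perm_binomials :: "(nat \<Rightarrow> nat) \<Rightarrow> (word \<times> word) set \<Rightarrow> (word \<times> word) set" where
  "perm_binomials \<sigma> G = (\<lambda>(u, v). (perm_word \<sigma> u, perm_word \<sigma> v)) ` G"

definition standard_w :: "word \<Rightarrow> bool" where
  "standard_w w \<longleftrightarrow> (\<forall>i. w i < 2)"

inductive red1 :: "(word \<times> word) set \<Rightarrow> word \<Rightarrow> word \<Rightarrow> bool" for B where
  nonstd: "\<not> standard_w w \<Longrightarrow> red1 B w (\<lambda>i. w i mod 2)"
| bin: "\<lbrakk> standard_w (mult_w u s); (u, u') \<in> B \<rbrakk> \<Longrightarrow> red1 B (mult_w u s) (mult_w u' s)"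

definition irreducible_w :: "(word \<times> word) set \<Rightarrow> word \<Rightarrow> bool" where
  "irreducible_w B w \<longleftrightarrow> \<not> (\<exists>w'. red1 B w w')"

definition reduces_to_zero :: "(word \<times> word) set \<Rightarrow> word \<times> word \<Rightarrow> bool" where
  "reduces_to_zero B b \<longleftrightarrow>
     (\<exists>z. (red1 B)\<^sup>*\<^sup>* (fst b) z \<and> (red1 B)\<^sup>*\<^sup>* (snd b) z \<and> irreducible_w B z)"

end

theory Submission
  imports Defs
begin

(* Run with the syndrome map of C, Algorithm R produces a set N that contains 1 and one word
   of each syndrome, together with binomials u - v where u and v have the same syndrome, v is
   in N and v precedes u in the error-vector order. Reducing a standard word by such a
   binomial and standardizing decreases it in this well-founded order, so every word has an
   irreducible normal form, and irreducible standard words lie in N. Reduction preserves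
   cosets of any code containing psi(u) + psi(v) for the binomials, so two words have the
   same normal form iff they lie in the same coset of C, and every codeword c is congruent to
   the word with support c, whose normal form is therefore 1. Hence a reduced basis determines
   its code, and two reduced bases belong to the same code iff each reduces to zero modulo the
   other. Finally, Algorithm R commutes with permuting the variables once the admissible order
   and the rows of the parity check matrix are permuted along, so sigma(G) is a reduced basis
   of sigma(C), and the three conditions all say that sigma(C) = C'. *)

definition vec_xor :: "bvec \<Rightarrow> bvec \<Rightarrow> bvec" where
  "vec_xor a b = (\<lambda>i. a i \<noteq> b i)"

definition std_w :: "word \<Rightarrow> word" where
  "std_w w = (\<lambda>i. w i mod 2)"

definition binom_vec :: "nat \<Rightarrow> word \<times> word \<Rightarrow> bvec" where
  "binom_vec n b = vec_xor (psi n (fst b)) (psi n (snd b))"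

lemma vec_xor_self [simp]: "vec_xor a a = (\<lambda>_. False)"
  and vec_xor_False [simp]: "vec_xor a (\<lambda>_. False) = a" "vec_xor (\<lambda>_. False) a = a"
  by (simp_all add: vec_xor_def)

lemma vec_xor_commute: "vec_xor a b = vec_xor b a"
  by (auto simp: vec_xor_def)

lemma vec_xor_trans: "vec_xor (vec_xor a b) (vec_xor b c) = vec_xor a c"
  by (auto simp: vec_xor_def)

lemma vec_xor_eq_False_iff: "vec_xor a b = (\<lambda>_. False) \<longleftrightarrow> a = b"
  by (auto simp: vec_xor_def fun_eq_iff)

lemma vec_xor_in_vectors: "a \<in> vectors n \<Longrightarrow> b \<in> vectors n \<Longrightarrow> vec_xor a b \<in> vectors n"
  by (simp add: vectors_def vec_xor_def)

lemma psi_in_vectors: "psi n w \<in> vectors n"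
  by (simp add: psi_def vectors_def)

lemma psi_one_w [simp]: "psi n one_w = (\<lambda>_. False)"
  by (simp add: psi_def one_w_def)

lemma psi_mult_w: "psi n (mult_w u v) = vec_xor (psi n u) (psi n v)"
  by (auto simp: psi_def vec_xor_def mult_w_def)

lemma psi_std_w [simp]: "psi n (std_w w) = psi n w"
  by (simp add: psi_def std_w_def)

definition vec_word :: "bvec \<Rightarrow> word" where
  "vec_word c = (\<lambda>i. if c i then 1 else 0)"

lemma vec_word_in_words: "c \<in> vectors n \<Longrightarrow> vec_word c \<in> words n"
  by (simp add: vec_word_def vectors_def words_def)

lemma psi_vec_word: "c \<in> vectors n \<Longrightarrow> psi n (vec_word c) = c"
  by (auto simp: psi_def vec_word_def vectors_def not_less[symmetric])

lemma binom_vec_in_vectors: "binom_vec n b \<in> vectors n"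
  by (simp add: binom_vec_def vec_xor_in_vectors psi_in_vectors)

lemma mult_w_commute: "mult_w u v = mult_w v u"
  by (simp add: mult_w_def add.commute)

lemma mult_w_one_w [simp]: "mult_w one_w w = w" "mult_w w one_w = w"
  by (simp_all add: mult_w_def one_w_def)

lemma one_w_in_words [simp]: "one_w \<in> words n"
  by (simp add: words_def one_w_def)

lemma var_w_in_words: "i < n \<Longrightarrow> var_w i \<in> words n"
  by (simp add: words_def var_w_def)

lemma mult_w_in_words_iff [simp]: "mult_w u v \<in> words n \<longleftrightarrow> u \<in> words n \<and> v \<in> words n"
  by (auto simp: words_def mult_w_def)

lemma std_w_in_words: "w \<in> words n \<Longrightarrow> std_w w \<in> words n"
  by (simp add: words_def std_w_def)

lemma standard_std_w: "standard_w (std_w w)"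
  by (simp add: standard_w_def std_w_def)

lemma std_w_standard: "standard_w w \<Longrightarrow> std_w w = w"
  by (simp add: standard_w_def std_w_def)

lemma divides_w_iff: "divides_w u w \<longleftrightarrow> (\<exists>s. w = mult_w u s)"
proof
  assume "divides_w u w"
  then have "w = mult_w u (\<lambda>i. w i - u i)"
    by (auto simp: divides_w_def mult_w_def)
  then show "\<exists>s. w = mult_w u s" by blast
qed (auto simp: divides_w_def mult_w_def)

lemma divides_w_refl [simp]: "divides_w w w"
  by (simp add: divides_w_def)

lemma divides_w_trans: "divides_w u v \<Longrightarrow> divides_w v w \<Longrightarrow> divides_w u w"
  unfolding divides_w_def using le_trans by blast

lemma Ind_subset_words: "w \<in> words n \<Longrightarrow> Ind w \<subseteq> {..<n}"
  by (auto simp: words_def Ind_def not_less[symmetric])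

lemma finite_Ind: "w \<in> words n \<Longrightarrow> finite (Ind w)"
  using Ind_subset_words finite_subset by blast

lemma Ind_mult_w: "Ind (mult_w u v) = Ind u \<union> Ind v"
  by (auto simp: Ind_def mult_w_def)

lemma Ind_var_w: "Ind (var_w i) = {i}"
  by (simp add: Ind_def var_w_def)

lemma Ind_std_w_subset: "Ind (std_w w) \<subseteq> Ind w"
  by (auto simp: Ind_def std_w_def)

lemma std_w_mult_w_disjoint:
  assumes "Ind u \<inter> Ind s = {}" and "standard_w s"
  shows "std_w (mult_w u s) = mult_w (std_w u) s"
proof
  fix i
  have "u i = 0 \<or> s i = 0"
    using assms(1) by (auto simp: Ind_def)
  moreover have "s i < 2"
    using assms(2) by (simp add: standard_w_def)
  ultimately show "std_w (mult_w u s) i = mult_w (std_w u) s i"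
    unfolding std_w_def mult_w_def by (elim disjE) simp_all
qed

lemma Ind_eq_empty_iff: "Ind w = {} \<longleftrightarrow> w = one_w"
  by (auto simp: Ind_def one_w_def fun_eq_iff)

definition std_words :: "nat \<Rightarrow> word set" where
  "std_words n = {w \<in> words n. standard_w w}"

lemma finite_std_words: "finite (std_words n)"
proof -
  have "inj_on Ind (std_words n)"
  proof (rule inj_onI)
    fix u v assume uv: "u \<in> std_words n" "v \<in> std_words n" and "Ind u = Ind v"
    show "u = v"
    proof
      fix i
      have "0 < u i \<longleftrightarrow> 0 < v i"
        using \<open>Ind u = Ind v\<close> unfolding Ind_def by blast
      moreover have "u i < 2" "v i < 2"
        using uv by (simp_all add: std_words_def standard_w_def)
      ultimately show "u i = v i"
        by linarith
    qed
  qed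
  moreover have "Ind ` std_words n \<subseteq> Pow {..<n}"
    using Ind_subset_words by (auto simp: std_words_def)
  ultimately show ?thesis
    by (meson finite_Pow_iff finite_lessThan finite_subset finite_imageD)
qed

lemma
  assumes "admissible n ord"
  shows admissible_irrefl: "u \<in> words n \<Longrightarrow> \<not> ord u u"
    and admissible_trans:
      "\<lbrakk>u \<in> words n; v \<in> words n; w \<in> words n; ord u v; ord v w\<rbrakk> \<Longrightarrow> ord u w"
    and admissible_total: "\<lbrakk>u \<in> words n; v \<in> words n; u \<noteq> v\<rbrakk> \<Longrightarrow> ord u v \<or> ord v u"
    and admissible_one_w: "\<lbrakk>w \<in> words n; w \<noteq> one_w\<rbrakk> \<Longrightarrow> ord one_w w"
    and admissible_mult:
      "\<lbrakk>u \<in> words n; v \<in> words n; w \<in> words n; ord u v\<rbrakk> \<Longrightarrow> ord (mult_w u w) (mult_w v w)"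
  using assms unfolding admissible_def by meson+

lemma admissible_less_mult:
  assumes "admissible n ord" "w \<in> words n" "t \<in> words n" "t \<noteq> one_w"
  shows "ord w (mult_w w t)"
proof -
  have "ord (mult_w one_w w) (mult_w t w)"
    by (rule admissible_mult[OF assms(1) one_w_in_words assms(3) assms(2)])
      (rule admissible_one_w[OF assms(1,3,4)])
  then show ?thesis
    by (simp add: mult_w_commute[of t w])
qed

lemma std_w_le:
  assumes "admissible n ord" and "v \<in> words n"
  shows "std_w v = v \<or> ord (std_w v) v"
proof -
  define t where "t = (\<lambda>i. v i - v i mod 2)"
  have v: "v = mult_w (std_w v) t"
    by (simp add: t_def std_w_def mult_w_def)
  have "t \<in> words n"
    using assms(2) by (simp add: t_def words_def)
  then have "t = one_w \<or> ord (std_w v) v"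
    using admissible_less_mult[OF assms(1) std_w_in_words[OF assms(2)]] v by metis
  then show ?thesis
    using v by auto
qed

lemma err_less_irrefl: "admissible n ord \<Longrightarrow> u \<in> words n \<Longrightarrow> \<not> err_less ord u u"
  by (simp add: err_less_def admissible_irrefl)

lemma err_less_trans:
  "\<lbrakk>admissible n ord; u \<in> words n; v \<in> words n; w \<in> words n;
    err_less ord u v; err_less ord v w\<rbrakk> \<Longrightarrow> err_less ord u w"
  unfolding err_less_def using admissible_trans[of n ord u v w] by linarith

lemma err_less_mult_var_w:
  assumes "admissible n ord" and "w \<in> words n" and "i < n"
  shows "err_less ord w (mult_w w (var_w i))"
proof (cases "i \<in> Ind w")
  case True
  have "var_w i \<noteq> one_w"
    by (metis Ind_eq_empty_iff Ind_var_w insert_not_empty)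
  then have "ord w (mult_w w (var_w i))"
    using assms by (simp add: admissible_less_mult var_w_in_words)
  then show ?thesis
    using True by (simp add: err_less_def Ind_mult_w Ind_var_w insert_absorb)
next
  case False
  then show ?thesis
    using finite_Ind[OF assms(2)] by (simp add: err_less_def Ind_mult_w Ind_var_w)
qed

lemma wf_err_less_std_words:
  assumes "admissible n ord"
  shows "wf {(v, w). v \<in> std_words n \<and> w \<in> std_words n \<and> err_less ord v w}"
    (is "wf ?R")
proof (rule finite_acyclic_wf)
  show "finite ?R"
    by (rule finite_subset[of _ "std_words n \<times> std_words n"]) (auto simp: finite_std_words)
  have "trans ?R"
    using err_less_trans[OF assms] by (auto simp: trans_def std_words_def)
  then show "acyclic ?R"
    using err_less_irrefl[OF assms] by (auto simp: acyclic_irrefl trancl_id irrefl_def std_words_def)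
qed

text \<open>If the number of indeterminates does not drop, the supports of \<open>u'\<close> and \<open>s\<close> are
  disjoint, so the reduct is \<open>mult_w (std_w u') s\<close> with \<open>std_w u' \<preceq> u' \<prec> u\<close>.\<close>

lemma err_less_reduct:
  assumes adm: "admissible n ord" and "standard_w (mult_w u s)"
    and words: "u \<in> words n" "u' \<in> words n" "s \<in> words n"
    and less: "err_less ord u' u"
  shows "err_less ord (std_w (mult_w u' s)) (mult_w u s)"
proof -
  let ?r = "std_w (mult_w u' s)"
  have fin: "finite (Ind u)" "finite (Ind u')" "finite (Ind s)"
    using words by (simp_all add: finite_Ind)
  have sum_lt: "u i + s i < 2" for i
    using assms(2) by (simp add: standard_w_def mult_w_def)
  have "u i = 0 \<or> s i = 0" for i
    using sum_lt[of i] by linarith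
  then have "Ind u \<inter> Ind s = {}"
    by (simp add: Ind_def disjoint_iff) (metis neq0_conv)
  then have card_w: "card (Ind (mult_w u s)) = card (Ind u) + card (Ind s)"
    by (simp add: Ind_mult_w card_Un_disjoint fin)
  have r_le: "card (Ind ?r) \<le> card (Ind u' \<union> Ind s)"
    by (rule card_mono) (use fin Ind_std_w_subset[of "mult_w u' s"] in \<open>auto simp: Ind_mult_w\<close>)
  have Un_le: "card (Ind u' \<union> Ind s) \<le> card (Ind u') + card (Ind s)"
    by (rule card_Un_le)
  show ?thesis
  proof (cases "card (Ind ?r) < card (Ind (mult_w u s))")
    case False
    with card_w r_le Un_le less have "ord u' u"
      and card_eq: "card (Ind ?r) = card (Ind (mult_w u s))"
      and "card (Ind u' \<union> Ind s) = card (Ind u') + card (Ind s)"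
      by (auto simp: err_less_def)
    then have "Ind u' \<inter> Ind s = {}"
      using card_Un_Int[OF fin(2,3)] fin by simp
    moreover have "standard_w s"
      unfolding standard_w_def using sum_lt by (metis add_lessD1 add.commute)
    ultimately have r: "?r = mult_w (std_w u') s"
      by (rule std_w_mult_w_disjoint)
    have "ord (std_w u') u"
      using std_w_le[OF adm words(2)] \<open>ord u' u\<close>
        admissible_trans[OF adm std_w_in_words[OF words(2)] words(2,1)] by auto
    then have "ord ?r (mult_w u s)"
      unfolding r using adm words by (simp add: admissible_mult std_w_in_words)
    with card_eq show ?thesis
      by (simp add: err_less_def)
  qed (simp add: err_less_def)
qed

subsection \<open>Codes, syndromes and reduction\<close>

lemma
  assumes "binary_linear_code n D"
  shows binary_linear_code_subset: "D \<subseteq> vectors n"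
    and binary_linear_code_zero: "(\<lambda>_. False) \<in> D"
    and binary_linear_code_xor: "a \<in> D \<Longrightarrow> b \<in> D \<Longrightarrow> vec_xor a b \<in> D"
  using assms unfolding binary_linear_code_def vec_xor_def by blast+

lemma card_symdiff_odd_iff:
  assumes "finite A" and "finite B"
  shows "odd (card ((A \<union> B) - (A \<inter> B))) \<longleftrightarrow> odd (card A) \<noteq> odd (card B)"
proof -
  have sub: "A \<inter> B \<subseteq> A \<union> B"
    by blast
  have "card ((A \<union> B) - (A \<inter> B)) = card (A \<union> B) - card (A \<inter> B)"
    using assms sub by (simp add: card_Diff_subset)
  moreover have "card (A \<inter> B) \<le> card (A \<union> B)"
    using assms sub by (simp add: card_mono)
  ultimately have "card ((A \<union> B) - (A \<inter> B)) + 2 * card (A \<inter> B) = card A + card B"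
    using card_Un_Int[OF assms] by linarith
  then show ?thesis
    by presburger
qed

lemma vec_mat_xor: "vec_mat n m (vec_xor a b) H = vec_xor (vec_mat n m a H) (vec_mat n m b H)"
proof
  fix j
  let ?A = "{i. i < n \<and> a i \<and> H i j}" and ?B = "{i. i < n \<and> b i \<and> H i j}"
  have "{i. i < n \<and> vec_xor a b i \<and> H i j} = (?A \<union> ?B) - (?A \<inter> ?B)"
    by (auto simp: vec_xor_def)
  then have "odd (card {i. i < n \<and> vec_xor a b i \<and> H i j}) \<longleftrightarrow> odd (card ?A) \<noteq> odd (card ?B)"
    by (simp add: card_symdiff_odd_iff)
  then show "vec_mat n m (vec_xor a b) H j = vec_xor (vec_mat n m a H) (vec_mat n m b H) j"
    by (auto simp: vec_mat_def vec_xor_def)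
qed

lemma syndrome_eq_iff:
  assumes "parity_check n D m H"
  shows "syndrome n m H u = syndrome n m H v \<longleftrightarrow> binom_vec n (u, v) \<in> D"
proof -
  have "syndrome n m H u = syndrome n m H v \<longleftrightarrow> vec_mat n m (binom_vec n (u, v)) H = (\<lambda>_. False)"
    by (simp add: syndrome_def binom_vec_def vec_mat_xor vec_xor_eq_False_iff)
  also have "\<dots> \<longleftrightarrow> binom_vec n (u, v) \<in> D"
    using assms binom_vec_in_vectors by (simp add: parity_check_def)
  finally show ?thesis .
qed

lemma binom_vec_commute: "binom_vec n (v, u) = binom_vec n (u, v)"
  by (simp add: binom_vec_def vec_xor_commute)

lemma binom_vec_trans:
  assumes "binary_linear_code n D" and "binom_vec n (u, v) \<in> D" and "binom_vec n (v, w) \<in> D"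
  shows "binom_vec n (u, w) \<in> D"
  using binary_linear_code_xor[OF assms] by (simp add: binom_vec_def vec_xor_trans)

lemma red1_binom_vec:
  assumes "binary_linear_code n D" and "binom_vec n ` B \<subseteq> D" and "red1 B w w'"
  shows "binom_vec n (w, w') \<in> D"
  using assms(3)
proof cases
  case nonstd
  then show ?thesis
    using binary_linear_code_zero[OF assms(1)] psi_std_w[of n w]
    by (simp add: binom_vec_def std_w_def)
next
  case (bin u s u')
  then have "binom_vec n (w, w') = binom_vec n (u, u')"
    by (auto simp: binom_vec_def psi_mult_w vec_xor_def)
  with bin assms(2) show ?thesis
    by blast
qed

lemma red1_rtranclp_binom_vec:
  assumes D: "binary_linear_code n D" and "binom_vec n ` B \<subseteq> D" and "(red1 B)\<^sup>*\<^sup>* w z"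
  shows "binom_vec n (w, z) \<in> D"
  using assms(3)
proof (induction rule: rtranclp_induct)
  case base
  then show ?case
    using binary_linear_code_zero[OF D] by (simp add: binom_vec_def)
next
  case (step y z)
  then show ?case
    using red1_binom_vec[OF assms(1,2)] binom_vec_trans[OF D] by blast
qed

lemma reduces_to_zero_binom_vec:
  assumes "binary_linear_code n D" and "binom_vec n ` B \<subseteq> D" and "reduces_to_zero B b"
  shows "binom_vec n b \<in> D"
  using assms red1_rtranclp_binom_vec[OF assms(1,2)] binom_vec_trans[OF assms(1)]
  unfolding reduces_to_zero_def by (metis binom_vec_commute prod.collapse)

lemma red1_rtranclp_std_w: "(red1 B)\<^sup>*\<^sup>* w (std_w w)"
  using red1.nonstd[of w B] std_w_standard[of w] unfolding std_w_def by fastforce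

lemma irreducible_w_standard_iff:
  assumes "standard_w w"
  shows "irreducible_w B w \<longleftrightarrow> \<not> (\<exists>(u, v)\<in>B. divides_w u w)"
proof
  assume "irreducible_w B w"
  then show "\<not> (\<exists>(u, v)\<in>B. divides_w u w)"
    using assms red1.bin[of _ _ _ B] unfolding irreducible_w_def divides_w_iff by blast
next
  assume no_divisor: "\<not> (\<exists>(u, v)\<in>B. divides_w u w)"
  show "irreducible_w B w"
    unfolding irreducible_w_def
  proof
    assume "\<exists>w'. red1 B w w'"
    then obtain w' where "red1 B w w'" ..
    then show False
      using assms no_divisor by cases (auto simp: divides_w_iff)
  qed
qed

subsection \<open>Algorithm R and normal forms\<close>

fun R_invariant :: "nat \<Rightarrow> (word \<Rightarrow> bvec) \<Rightarrow> (word \<Rightarrow> word \<Rightarrow> bool) \<Rightarrow> rstate \<Rightarrow> bool" where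
  "R_invariant n xi ord (L, N, G) \<longleftrightarrow>
     L \<subseteq> words n \<and> N \<subseteq> words n \<and>
     ((L = {one_w} \<and> N = {} \<and> G = {}) \<or> one_w \<in> N) \<and>
     inj_on xi N \<and>
     (\<forall>a\<in>N. \<forall>b\<in>L. err_less ord a b) \<and>
     (\<forall>(u, v)\<in>G. u \<in> words n \<and> v \<in> N \<and> xi u = xi v \<and> err_less ord v u) \<and>
     (\<forall>a\<in>N. \<forall>i<n. mult_w a (var_w i) \<in> L \<union> N \<or>
        (\<exists>(u, v)\<in>G. divides_w u (mult_w a (var_w i))))"

lemma R_step_preserves_R_invariant:
  assumes adm: "admissible n ord" and "R_step n xi ord s s'" and "R_invariant n xi ord s"
  shows "R_invariant n xi ord s'"
  using assms(2)
proof cases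
  case (discard w L G N)
  then show ?thesis
    using assms(3) by auto
next
  case (newbin w L G w' N)
  with assms(3) have "err_less ord w' w" and "w \<in> words n"
    by auto
  with newbin assms(3) show ?thesis
    by (auto 0 4)
next
  case (newstd w L G N)
  let ?S = "{mult_w w (var_w i) | i. i < n}"
  have N_L: "\<forall>a\<in>N. \<forall>b\<in>L. err_less ord a b" and "N \<subseteq> words n" "w \<in> words n"
    using newstd assms(3) by auto
  have S: "?S \<subseteq> words n" "\<forall>b\<in>?S. err_less ord w b"
    using \<open>w \<in> words n\<close> err_less_mult_var_w[OF adm] by (auto intro: var_w_in_words)
  have "err_less ord a b" if ab: "a \<in> N \<union> {w}" "b \<in> (L - {w}) \<union> ?S" for a b
  proof -
    consider "a \<in> N" "b \<in> L" | "a \<in> N" "b \<in> ?S" | "a = w" "b \<in> L - {w}" | "a = w" "b \<in> ?S"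
      using ab by blast
    then show ?thesis
    proof cases
      case 2
      then show ?thesis
        using N_L S newstd(3) \<open>N \<subseteq> words n\<close> err_less_trans[OF adm _ \<open>w \<in> words n\<close>] by blast
    qed (use N_L S newstd in auto)
  qed
  moreover have "one_w \<in> N \<union> {w}" and "inj_on xi (N \<union> {w})"
    using newstd assms(3) by auto
  ultimately show ?thesis
    using newstd assms(3) S by auto
qed

lemma R_output_R_invariant:
  assumes "admissible n ord" and "R_output n xi ord N G"
  shows "R_invariant n xi ord ({}, N, G)"
proof -
  have "(R_step n xi ord)\<^sup>*\<^sup>* ({one_w}, {}, {}) ({}, N, G)"
    using assms(2) by (simp add: R_output_def)
  then show ?thesis
    by (induction rule: rtranclp_induct) (auto intro: R_step_preserves_R_invariant[OF assms(1)])
qed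

context
  fixes n xi ord N G
  assumes adm: "admissible n ord" and inv: "R_invariant n xi ord ({}, N, G)"
begin

text \<open>Removing one indeterminate gives a word in \<open>N\<close> by induction, and the successors of
  elements of \<open>N\<close> are in \<open>N\<close> or divisible by a leading word.\<close>

lemma R_invariant_irreducible_in_N:
  assumes "w \<in> std_words n" and "\<not> (\<exists>(u, v)\<in>G. divides_w u w)"
  shows "w \<in> N"
  using assms
proof (induction "card (Ind w)" arbitrary: w rule: less_induct)
  case less
  show ?case
  proof (cases "Ind w = {}")
    case True
    then show ?thesis
      using inv by (simp add: Ind_eq_empty_iff)
  next
    case False
    then obtain i where i: "i \<in> Ind w" by blast
    define w0 where "w0 = w(i := 0)"
    have "w i < 2"
      using less.prems(1) by (simp add: std_words_def standard_w_def)
    with i have "w i = 1"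
      by (simp add: Ind_def)
    then have w: "w = mult_w w0 (var_w i)"
      by (auto simp: w0_def mult_w_def var_w_def)
    have "card (Ind w0) < card (Ind w)"
      using i less.prems(1) finite_Ind
      by (auto simp: w0_def Ind_def std_words_def intro!: psubset_card_mono)
    moreover have "w0 \<in> std_words n"
      using less.prems(1) by (simp add: w0_def std_words_def words_def standard_w_def)
    moreover have "divides_w w0 w"
      by (simp add: w0_def divides_w_def)
    then have "\<not> (\<exists>(u, v)\<in>G. divides_w u w0)"
      using less.prems(2) divides_w_trans by blast
    ultimately have "w0 \<in> N"
      using less.hyps by blast
    moreover have "i < n"
      using i less.prems(1) Ind_subset_words by (auto simp: std_words_def)
    moreover have "\<forall>a\<in>N. \<forall>i<n. mult_w a (var_w i) \<in> N \<or>
        (\<exists>(u, v)\<in>G. divides_w u (mult_w a (var_w i)))"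
      using inv by simp
    ultimately show ?thesis
      using less.prems(2) w by blast
  qed
qed

lemma R_invariant_normal_form_standard:
  assumes "w \<in> std_words n"
  shows "\<exists>z\<in>N. (red1 G)\<^sup>*\<^sup>* w z \<and> irreducible_w G z"
  using wf_err_less_std_words[OF adm] assms
proof (induction w rule: wf_induct_rule)
  case (less w)
  have w: "w \<in> words n" "standard_w w"
    using less.prems by (auto simp: std_words_def)
  show ?case
  proof (cases "\<exists>(u, v)\<in>G. divides_w u w")
    case True
    then obtain u u' s where uu': "(u, u') \<in> G" and ws: "w = mult_w u s"
      by (auto simp: divides_w_iff)
    let ?r = "std_w (mult_w u' s)"
    have "u \<in> words n" "u' \<in> words n" "err_less ord u' u" "s \<in> words n"
      using inv uu' w(1) ws by auto
    then have "err_less ord ?r w" and "?r \<in> std_words n"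
      using err_less_reduct[OF adm] w ws
      by (auto simp: std_words_def std_w_in_words standard_std_w)
    with less.prems have "\<exists>z\<in>N. (red1 G)\<^sup>*\<^sup>* ?r z \<and> irreducible_w G z"
      by (intro less.IH) auto
    then obtain z where "z \<in> N" "(red1 G)\<^sup>*\<^sup>* ?r z" "irreducible_w G z"
      by blast
    moreover have "(red1 G)\<^sup>*\<^sup>* w ?r"
      using red1.bin[OF _ uu', of s] w ws red1_rtranclp_std_w
      by (meson converse_rtranclp_into_rtranclp)
    ultimately show ?thesis
      by (meson rtranclp_trans)
  next
    case False
    then show ?thesis
      using R_invariant_irreducible_in_N less.prems w(2) irreducible_w_standard_iff by blast
  qed
qed

lemma R_invariant_normal_form:
  assumes "w \<in> words n"
  shows "\<exists>z\<in>N. (red1 G)\<^sup>*\<^sup>* w z \<and> irreducible_w G z"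
proof -
  have "std_w w \<in> std_words n"
    using assms by (simp add: std_words_def std_w_in_words standard_std_w)
  then show ?thesis
    using R_invariant_normal_form_standard red1_rtranclp_std_w by (meson rtranclp_trans)
qed

end

lemma reduced_basis_normal_forms:
  assumes "reduced_basis n D G"
  obtains N where "one_w \<in> N"
    and "\<And>a b. \<lbrakk>a \<in> N; b \<in> N; binom_vec n (a, b) \<in> D\<rbrakk> \<Longrightarrow> a = b"
    and "\<And>w. w \<in> words n \<Longrightarrow> \<exists>z\<in>N. (red1 G)\<^sup>*\<^sup>* w z \<and> irreducible_w G z"
    and "G \<subseteq> words n \<times> words n" and "binom_vec n ` G \<subseteq> D"
proof -
  obtain ord m H N where adm: "admissible n ord" and pc: "parity_check n D m H"
    and out: "R_output n (syndrome n m H) ord N G"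
    using assms unfolding reduced_basis_def by blast
  have inv: "R_invariant n (syndrome n m H) ord ({}, N, G)"
    using R_output_R_invariant[OF adm out] .
  show thesis
  proof (rule that)
    show "one_w \<in> N" and "G \<subseteq> words n \<times> words n"
      using inv by auto
    show "a = b" if "a \<in> N" "b \<in> N" "binom_vec n (a, b) \<in> D" for a b
      using inv that syndrome_eq_iff[OF pc] by (auto dest: inj_onD)
    show "binom_vec n ` G \<subseteq> D"
      using inv syndrome_eq_iff[OF pc] by auto
  qed (rule R_invariant_normal_form[OF adm inv])
qed

lemma reduced_basis_binomials:
  assumes "reduced_basis n D G"
  shows "G \<subseteq> words n \<times> words n" and "binom_vec n ` G \<subseteq> D"
  using reduced_basis_normal_forms[OF assms] by metis+

lemma reduced_basis_reduces_to_zero: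
  assumes D: "binary_linear_code n D" and "reduced_basis n D G"
    and b: "b \<in> words n \<times> words n" "binom_vec n b \<in> D"
  shows "reduces_to_zero G b"
proof -
  obtain N where N_eq: "\<And>a b. \<lbrakk>a \<in> N; b \<in> N; binom_vec n (a, b) \<in> D\<rbrakk> \<Longrightarrow> a = b"
    and nf: "\<And>w. w \<in> words n \<Longrightarrow> \<exists>z\<in>N. (red1 G)\<^sup>*\<^sup>* w z \<and> irreducible_w G z"
    and "binom_vec n ` G \<subseteq> D"
    using reduced_basis_normal_forms[OF assms(2)] by metis
  obtain z1 z2 where z: "z1 \<in> N" "z2 \<in> N"
    and red: "(red1 G)\<^sup>*\<^sup>* (fst b) z1" "(red1 G)\<^sup>*\<^sup>* (snd b) z2"
    and irr: "irreducible_w G z1"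
    using nf b(1) by (metis mem_Times_iff)
  have "binom_vec n (z1, fst b) \<in> D" "binom_vec n (snd b, z2) \<in> D"
    using red1_rtranclp_binom_vec[OF D \<open>binom_vec n ` G \<subseteq> D\<close>] red binom_vec_commute by metis+
  with b(2) have "binom_vec n (z1, z2) \<in> D"
    using binom_vec_trans[OF D] by (metis prod.collapse)
  then have "z1 = z2"
    using N_eq z by blast
  then show ?thesis
    using red irr by (auto simp: reduces_to_zero_def)
qed

text \<open>A codeword \<open>c\<close> and the normal form of \<open>vec_word c\<close> lie in the same coset of every
  code containing the binomials; for \<open>D\<close> itself that is the coset of \<open>1\<close>, which \<open>N\<close> meets
  only in \<open>1\<close>.\<close>

lemma reduced_basis_code_subset:
  assumes D: "binary_linear_code n D" and E: "binary_linear_code n E"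
    and "reduced_basis n D G" and GE: "binom_vec n ` G \<subseteq> E"
  shows "D \<subseteq> E"
proof
  fix c assume "c \<in> D"
  then have c: "c \<in> vectors n"
    using binary_linear_code_subset[OF D] by blast
  obtain N where "one_w \<in> N"
    and N_eq: "\<And>a b. \<lbrakk>a \<in> N; b \<in> N; binom_vec n (a, b) \<in> D\<rbrakk> \<Longrightarrow> a = b"
    and nf: "\<And>w. w \<in> words n \<Longrightarrow> \<exists>z\<in>N. (red1 G)\<^sup>*\<^sup>* w z \<and> irreducible_w G z"
    and GD: "binom_vec n ` G \<subseteq> D"
    using reduced_basis_normal_forms[OF assms(3)] by metis
  obtain z where "z \<in> N" and red: "(red1 G)\<^sup>*\<^sup>* (vec_word c) z"
    using nf[OF vec_word_in_words[OF c]] by blast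
  have c_eq: "binom_vec n (vec_word c, one_w) = c"
    using c by (simp add: binom_vec_def psi_vec_word)
  have "binom_vec n (z, vec_word c) \<in> D"
    using red1_rtranclp_binom_vec[OF D GD red] binom_vec_commute by metis
  then have "binom_vec n (z, one_w) \<in> D"
    using binom_vec_trans[OF D] c_eq \<open>c \<in> D\<close> by metis
  then have "z = one_w"
    using N_eq \<open>z \<in> N\<close> \<open>one_w \<in> N\<close> by blast
  then show "c \<in> E"
    using red1_rtranclp_binom_vec[OF E GE red] c_eq by simp
qed

subsection \<open>Permuting the variables\<close>

context
  fixes \<sigma> :: "nat \<Rightarrow> nat" and n :: nat
  assumes \<sigma>: "\<sigma> permutes {..<n}"
begin

lemma permutes_lessThan_simps [simp]:
  "\<sigma> (inv \<sigma> i) = i" "inv \<sigma> (\<sigma> i) = i" "\<sigma> i < n \<longleftrightarrow> i < n" "inv \<sigma> i < n \<longleftrightarrow> i < n"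
  using permutes_inverses[OF \<sigma>] permutes_in_image[OF \<sigma>]
    permutes_in_image[OF permutes_inv[OF \<sigma>]] by auto

lemma permutes_lessThan_fixed: "n \<le> i \<Longrightarrow> inv \<sigma> i = i"
  using permutes_not_in[OF permutes_inv[OF \<sigma>]] by simp

lemma perm_word_inv [simp]:
  "perm_word \<sigma> (perm_word (inv \<sigma>) w) = w" "perm_word (inv \<sigma>) (perm_word \<sigma> w) = w"
  by (simp_all add: perm_word_def permutes_inv_inv[OF \<sigma>])

lemma perm_word_eq_iff [simp]: "perm_word \<sigma> u = perm_word \<sigma> v \<longleftrightarrow> u = v"
  by (metis perm_word_inv(2))

lemma perm_word_in_words_iff [simp]: "perm_word \<sigma> w \<in> words n \<longleftrightarrow> w \<in> words n"
  by (simp add: words_def perm_word_def permutes_lessThan_fixed)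

lemma perm_word_one_w [simp]: "perm_word \<sigma> one_w = one_w"
  by (simp add: perm_word_def one_w_def)

lemma perm_word_mult_w [simp]: "perm_word \<sigma> (mult_w u v) = mult_w (perm_word \<sigma> u) (perm_word \<sigma> v)"
  by (simp add: perm_word_def mult_w_def)

lemma perm_word_var_w [simp]: "perm_word \<sigma> (var_w i) = var_w (\<sigma> i)"
  by (auto simp: perm_word_def var_w_def permutes_inv_eq[OF \<sigma>])

lemma Ind_perm_word: "Ind (perm_word \<sigma> w) = \<sigma> ` Ind w"
  by (auto simp: Ind_def perm_word_def image_iff) (metis permutes_lessThan_simps(1))

lemma card_Ind_perm_word [simp]: "card (Ind (perm_word \<sigma> w)) = card (Ind w)"
  by (simp add: Ind_perm_word card_image permutes_inj_on[OF \<sigma>])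

lemma divides_w_perm_word_iff [simp]:
  "divides_w (perm_word \<sigma> u) (perm_word \<sigma> w) \<longleftrightarrow> divides_w u w"
proof
  assume "divides_w (perm_word \<sigma> u) (perm_word \<sigma> w)"
  then have "u (inv \<sigma> (\<sigma> i)) \<le> w (inv \<sigma> (\<sigma> i))" for i
    unfolding divides_w_def perm_word_def by blast
  then show "divides_w u w"
    by (simp add: divides_w_def)
qed (simp add: divides_w_def perm_word_def)

lemma psi_perm_word: "psi n (perm_word \<sigma> w) = perm_vec \<sigma> (psi n w)"
  by (simp add: psi_def perm_word_def perm_vec_def)

lemma perm_vec_inv [simp]:
  "perm_vec (inv \<sigma>) (perm_vec \<sigma> c) = c" "perm_vec \<sigma> (perm_vec (inv \<sigma>) c) = c"
  by (simp_all add: perm_vec_def permutes_inv_inv[OF \<sigma>])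

lemma perm_vec_in_vectors: "c \<in> vectors n \<Longrightarrow> perm_vec \<sigma> c \<in> vectors n"
  by (simp add: vectors_def perm_vec_def permutes_lessThan_fixed)

lemma binary_linear_code_perm_code:
  assumes "binary_linear_code n C"
  shows "binary_linear_code n (perm_code \<sigma> C)"
proof -
  have "(\<lambda>i. perm_vec \<sigma> a i \<noteq> perm_vec \<sigma> b i) = perm_vec \<sigma> (\<lambda>i. a i \<noteq> b i)" for a b
    by (simp add: perm_vec_def)
  then show ?thesis
    using assms perm_vec_in_vectors unfolding binary_linear_code_def perm_code_def
    by (auto simp: perm_vec_def image_iff)
qed

lemma mem_perm_code_iff: "c \<in> perm_code \<sigma> C \<longleftrightarrow> perm_vec (inv \<sigma>) c \<in> C"
  by (auto simp: perm_code_def image_iff) (metis perm_vec_inv(2))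

lemma card_perm_code: "card (perm_code \<sigma> C) = card C"
  unfolding perm_code_def by (rule card_image) (metis inj_onI perm_vec_inv(1))

lemma perm_binomials_divides_iff:
  "(\<exists>(u, v)\<in>perm_binomials \<sigma> G. divides_w u (perm_word \<sigma> w)) \<longleftrightarrow> (\<exists>(u, v)\<in>G. divides_w u w)"
  by (force simp: perm_binomials_def)

lemma perm_word_successors:
  "perm_word \<sigma> ` {mult_w w (var_w i) | i. i < n} = {mult_w (perm_word \<sigma> w) (var_w i) | i. i < n}"
proof
  show "{mult_w (perm_word \<sigma> w) (var_w i) | i. i < n} \<subseteq> perm_word \<sigma> ` {mult_w w (var_w i) | i. i < n}"
  proof
    fix x assume "x \<in> {mult_w (perm_word \<sigma> w) (var_w i) | i. i < n}"
    then obtain i where "i < n" and "x = mult_w (perm_word \<sigma> w) (var_w i)"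
      by blast
    then have "x = perm_word \<sigma> (mult_w w (var_w (inv \<sigma> i)))" and "inv \<sigma> i < n"
      by simp_all
    then show "x \<in> perm_word \<sigma> ` {mult_w w (var_w i) | i. i < n}"
      by blast
  qed
qed auto

lemma vec_mat_perm_vec: "vec_mat n m (perm_vec \<sigma> c) (\<lambda>i. H (inv \<sigma> i)) = vec_mat n m c H"
proof
  fix j
  have "{i. i < n \<and> perm_vec \<sigma> c i \<and> H (inv \<sigma> i) j} = \<sigma> ` {i. i < n \<and> c i \<and> H i j}"
    by (auto simp: perm_vec_def image_iff) (metis permutes_lessThan_simps(1,4))
  then show "vec_mat n m (perm_vec \<sigma> c) (\<lambda>i. H (inv \<sigma> i)) j = vec_mat n m c H j"
    by (simp add: vec_mat_def card_image inj_on_subset[OF permutes_inj[OF \<sigma>] subset_UNIV])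
qed

end

lemma parity_check_perm_code:
  assumes \<sigma>: "\<sigma> permutes {..<n}" and "parity_check n C m H"
  shows "parity_check n (perm_code \<sigma> C) m (\<lambda>i. H (inv \<sigma> i))"
proof -
  have "vec_mat n m c (\<lambda>i. H (inv \<sigma> i)) = vec_mat n m (perm_vec (inv \<sigma>) c) H" for c
    using vec_mat_perm_vec[OF \<sigma>, of m "perm_vec (inv \<sigma>) c" H] \<sigma> by simp
  then show ?thesis
    using assms perm_vec_in_vectors[OF permutes_inv[OF \<sigma>]]
    by (simp add: parity_check_def mem_perm_code_iff card_perm_code)
qed

lemma admissible_perm_word:
  assumes \<sigma>: "\<sigma> permutes {..<n}" and adm: "admissible n ord"
  shows "admissible n (\<lambda>u v. ord (perm_word \<sigma> u) (perm_word \<sigma> v))"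
  unfolding admissible_def
proof (intro conjI ballI impI)
  let ?p = "perm_word \<sigma>"
  show "\<not> ord (?p u) (?p u)" if "u \<in> words n" for u
    using admissible_irrefl[OF adm, of "?p u"] that \<sigma> by simp
  show "ord (?p u) (?p w)" if "u \<in> words n" "v \<in> words n" "w \<in> words n"
    and "ord (?p u) (?p v)" "ord (?p v) (?p w)" for u v w
    using admissible_trans[OF adm, of "?p u" "?p v" "?p w"] that \<sigma> by simp
  show "ord (?p u) (?p v) \<or> ord (?p v) (?p u)" if "u \<in> words n" "v \<in> words n" "u \<noteq> v" for u v
    using admissible_total[OF adm, of "?p u" "?p v"] that \<sigma> by simp
  show "ord (?p one_w) (?p w)" if "w \<in> words n" "w \<noteq> one_w" for w
    using admissible_one_w[OF adm, of "?p w"] that \<sigma> perm_word_eq_iff[OF \<sigma>, of w one_w] by simp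
  show "ord (?p (mult_w u w)) (?p (mult_w v w))" if "u \<in> words n" "v \<in> words n" "w \<in> words n"
    and "ord (?p u) (?p v)" for u v w
    using admissible_mult[OF adm, of "?p u" "?p v" "?p w"] that \<sigma> by simp
qed

definition perm_state :: "(nat \<Rightarrow> nat) \<Rightarrow> rstate \<Rightarrow> rstate" where
  "perm_state \<sigma> = (\<lambda>(L, N, G). (perm_word \<sigma> ` L, perm_word \<sigma> ` N, perm_binomials \<sigma> G))"

context
  fixes \<sigma> :: "nat \<Rightarrow> nat" and n :: nat and xi xi' :: "word \<Rightarrow> bvec" and ord ord' :: "word \<Rightarrow> word \<Rightarrow> bool"
  assumes \<sigma>: "\<sigma> permutes {..<n}"
    and xi': "\<And>w. xi' (perm_word \<sigma> w) = xi w"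
    and ord': "\<And>u v. ord' (perm_word \<sigma> u) (perm_word \<sigma> v) = ord u v"
begin

lemma R_step_perm_state:
  assumes "R_step n xi ord s s'"
  shows "R_step n xi' ord' (perm_state \<sigma> s) (perm_state \<sigma> s')"
proof -
  let ?p = "perm_word \<sigma>"
  have err': "err_less ord' (?p u) (?p v) \<longleftrightarrow> err_less ord u v" for u v
    by (simp add: err_less_def card_Ind_perm_word[OF \<sigma>] ord')
  have min: "\<forall>w'\<in>?p ` L. w' \<noteq> ?p w \<longrightarrow> err_less ord' (?p w) w'"
    if "\<forall>w'\<in>L. w' \<noteq> w \<longrightarrow> err_less ord w w'" for L w
    using that err' by auto
  have diff: "?p ` (L - {w}) = ?p ` L - {?p w}" for L w
    by (auto simp: perm_word_eq_iff[OF \<sigma>])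
  note divides = perm_binomials_divides_iff[OF \<sigma>]
  from assms show ?thesis
  proof cases
    case (discard w L G N)
    then have "R_step n xi' ord' (?p ` L, ?p ` N, perm_binomials \<sigma> G)
        (?p ` L - {?p w}, ?p ` N, perm_binomials \<sigma> G)"
      by (intro R_step.discard min) (auto simp: divides)
    then show ?thesis
      using discard by (simp add: perm_state_def diff)
  next
    case (newbin w L G w' N)
    then have "R_step n xi' ord' (?p ` L, ?p ` N, perm_binomials \<sigma> G)
        (?p ` L - {?p w}, ?p ` N, perm_binomials \<sigma> G \<union> {(?p w, ?p w')})"
      by (intro R_step.newbin min) (auto simp: divides xi')
    then show ?thesis
      using newbin by (simp add: perm_state_def diff perm_binomials_def)
  next
    case (newstd w L G N)
    then have "R_step n xi' ord' (?p ` L, ?p ` N, perm_binomials \<sigma> G)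
        ((?p ` L - {?p w}) \<union> {mult_w (?p w) (var_w i) | i. i < n}, ?p ` N \<union> {?p w},
          perm_binomials \<sigma> G)"
      by (intro R_step.newstd min) (auto simp: divides xi')
    then show ?thesis
      using newstd by (simp add: perm_state_def diff image_Un perm_word_successors[OF \<sigma>])
  qed
qed

lemma R_output_perm:
  assumes "R_output n xi ord N G"
  shows "R_output n xi' ord' (perm_word \<sigma> ` N) (perm_binomials \<sigma> G)"
proof -
  have "(R_step n xi' ord')\<^sup>*\<^sup>* (perm_state \<sigma> s) (perm_state \<sigma> s')"
    if "(R_step n xi ord)\<^sup>*\<^sup>* s s'" for s s'
    using that by induction (auto intro: rtranclp.rtrancl_into_rtrancl R_step_perm_state)
  from this[of "({one_w}, {}, {})" "({}, N, G)"] show ?thesis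
    using assms by (simp add: R_output_def perm_state_def perm_word_one_w[OF \<sigma>] perm_binomials_def)
qed

end

lemma reduced_basis_perm_code:
  assumes \<sigma>: "\<sigma> permutes {..<n}" and "reduced_basis n C G"
  shows "reduced_basis n (perm_code \<sigma> C) (perm_binomials \<sigma> G)"
proof -
  obtain ord m H N where adm: "admissible n ord" and pc: "parity_check n C m H"
    and out: "R_output n (syndrome n m H) ord N G"
    using assms(2) unfolding reduced_basis_def by blast
  let ?ord' = "\<lambda>u v. ord (perm_word (inv \<sigma>) u) (perm_word (inv \<sigma>) v)"
  let ?H' = "\<lambda>i. H (inv \<sigma> i)"
  have "R_output n (syndrome n m ?H') ?ord' (perm_word \<sigma> ` N) (perm_binomials \<sigma> G)"
    by (rule R_output_perm[OF \<sigma> _ _ out])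
      (simp_all add: syndrome_def psi_perm_word[OF \<sigma>] vec_mat_perm_vec[OF \<sigma>] perm_word_inv[OF \<sigma>])
  moreover have "admissible n ?ord'"
    using admissible_perm_word[OF permutes_inv[OF \<sigma>] adm] .
  moreover have "parity_check n (perm_code \<sigma> C) m ?H'"
    using parity_check_perm_code[OF \<sigma> pc] .
  ultimately show ?thesis
    unfolding reduced_basis_def by blast
qed

lemma reduced_basis_code_unique:
  assumes "binary_linear_code n D" and "binary_linear_code n E" and "reduced_basis n D G"
  shows "reduced_basis n E G \<longleftrightarrow> E = D"
proof
  assume "reduced_basis n E G"
  then show "E = D"
    using reduced_basis_code_subset[OF assms] reduced_basis_code_subset[OF assms(2,1)]
      reduced_basis_binomials(2) assms(3) by (metis subset_antisym)
qed (use assms(3) in simp)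

lemma reduced_bases_eq_iff_reduces_to_zero:
  assumes D: "binary_linear_code n D" and E: "binary_linear_code n E"
    and G: "reduced_basis n D G" and H: "reduced_basis n E H"
  shows "D = E \<longleftrightarrow> (\<forall>b\<in>G. reduces_to_zero H b) \<and> (\<forall>b\<in>H. reduces_to_zero G b)"
proof
  assume "D = E"
  then have "binom_vec n ` G \<subseteq> E" and "binom_vec n ` H \<subseteq> D"
    using reduced_basis_binomials(2)[OF G] reduced_basis_binomials(2)[OF H] by simp_all
  then show "(\<forall>b\<in>G. reduces_to_zero H b) \<and> (\<forall>b\<in>H. reduces_to_zero G b)"
    using reduced_basis_binomials(1)[OF G] reduced_basis_binomials(1)[OF H]
    by (blast intro: reduced_basis_reduces_to_zero[OF E H] reduced_basis_reduces_to_zero[OF D G])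
next
  assume "(\<forall>b\<in>G. reduces_to_zero H b) \<and> (\<forall>b\<in>H. reduces_to_zero G b)"
  then have "binom_vec n ` G \<subseteq> E" and "binom_vec n ` H \<subseteq> D"
    using reduces_to_zero_binom_vec[OF E reduced_basis_binomials(2)[OF H]]
      reduces_to_zero_binom_vec[OF D reduced_basis_binomials(2)[OF G]] by auto
  then show "D = E"
    using reduced_basis_code_subset[OF D E G] reduced_basis_code_subset[OF E D H] by blast
qed

theorem theorem4p2:
  fixes n :: nat and C C' :: "bvec set" and \<sigma> :: "nat \<Rightarrow> nat"
    and G G' :: "(word \<times> word) set"
  assumes "binary_linear_code n C" and "binary_linear_code n C'"
    and "\<sigma> permutes {..<n}"
    and "reduced_basis n C G" and "reduced_basis n C' G'"
  shows "(C' = perm_code \<sigma> C \<longleftrightarrow> reduced_basis n C' (perm_binomials \<sigma> G)) \<and>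
         (reduced_basis n C' (perm_binomials \<sigma> G) \<longleftrightarrow>
            ((\<forall>b\<in>perm_binomials \<sigma> G. reduces_to_zero G' b) \<and>
             (\<forall>b\<in>G'. reduces_to_zero (perm_binomials \<sigma> G) b)))"
proof -
  have \<sigma>C: "binary_linear_code n (perm_code \<sigma> C)"
    using binary_linear_code_perm_code[OF assms(3,1)] .
  have \<sigma>G: "reduced_basis n (perm_code \<sigma> C) (perm_binomials \<sigma> G)"
    using reduced_basis_perm_code[OF assms(3,4)] .
  have "reduced_basis n C' (perm_binomials \<sigma> G) \<longleftrightarrow> C' = perm_code \<sigma> C"
    using reduced_basis_code_unique[OF \<sigma>C assms(2) \<sigma>G] .
  moreover have "perm_code \<sigma> C = C' \<longleftrightarrow>
      (\<forall>b\<in>perm_binomials \<sigma> G. reduces_to_zero G' b) \<and> (\<forall>b\<in>G'. reduces_to_zero (perm_binomials \<sigma> G) b)"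
    using reduced_bases_eq_iff_reduces_to_zero[OF \<sigma>C assms(2) \<sigma>G assms(5)] .
  ultimately show ?thesis
    by auto
qed

end
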